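(* Let $M$ be a real $n\times n$ matrix, $n\ge2$. If both $M$ and $M^{[2]}$ are $P_0$-matrices, then $M$ is positive semistable. If both $M$ and $M^{[2]}$ are $P$-matrices, then $M$ is positive stable.
   Context: A square real matrix is a $P$-matrix (resp. $P_0$-matrix) if all its principal minors are positive (resp. nonnegative). It is positive stable (resp. positive semistable) if all its eigenvalues have positive (resp. nonnegative) real part. For $M\in\mathbb{R}^{n\times n}$, $M^{[2]}$ is the second additive compound: the matrix of $u\wedge v\mapsto Mu\wedge v+u\wedge Mv$ on $\Lambda^2\mathbb{R}^n$ with respect to the lexicographically ordered basis $e_i\wedge e_j$ ($i<j$). *)

theory Defs
  imports "Jordan_Normal_Form.Char_Poly" "Jordan_Normal_Form.DL_Submatrix"
begin

definition P_matrix :: "real mat \<Rightarrow> bool" where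
  "P_matrix A \<longleftrightarrow> (\<forall>I. I \<subseteq> {0..<dim_row A} \<and> I \<noteq> {} \<longrightarrow> det (submatrix A I I) > 0)"

definition P0_matrix :: "real mat \<Rightarrow> bool" where
  "P0_matrix A \<longleftrightarrow> (\<forall>I. I \<subseteq> {0..<dim_row A} \<and> I \<noteq> {} \<longrightarrow> det (submatrix A I I) \<ge> 0)"

definition positive_stable :: "real mat \<Rightarrow> bool" where
  "positive_stable A \<longleftrightarrow> (\<forall>c. eigenvalue (map_mat complex_of_real A) c \<longrightarrow> Re c > 0)"

definition positive_semistable :: "real mat \<Rightarrow> bool" where
  "positive_semistable A \<longleftrightarrow> (\<forall>c. eigenvalue (map_mat complex_of_real A) c \<longrightarrow> Re c \<ge> 0)"

text \<open>Lexicographically ordered index pairs (i,j), i<j, for the basis e_i \<and> e_j.\<close>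

definition wedge_pairs :: "nat \<Rightarrow> (nat \<times> nat) list" where
  "wedge_pairs n = concat (map (\<lambda>i. map (\<lambda>j. (i, j)) [Suc i..<n]) [0..<n])"

text \<open>Coefficient of e_i \<and> e_j in M e_k \<and> e_l + e_k \<and> M e_l (i<j, k<l).\<close>

definition compound2_entry :: "real mat \<Rightarrow> nat \<times> nat \<Rightarrow> nat \<times> nat \<Rightarrow> real" where
  "compound2_entry M ij kl = (case ij of (i, j) \<Rightarrow> case kl of (k, l) \<Rightarrow>
      (if l = j then M $$ (i, k) else 0) - (if l = i then M $$ (j, k) else 0)
    + (if k = i then M $$ (j, l) else 0) - (if k = j then M $$ (i, l) else 0))"

definition second_additive_compound :: "real mat \<Rightarrow> real mat" where
  "second_additive_compound M =
     (let ps = wedge_pairs (dim_row M) in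
      mat (length ps) (length ps) (\<lambda>(a, b). compound2_entry M (ps ! a) (ps ! b)))"

end

theory Submission
  imports Defs
begin

text \<open>Let c = a + i b be an eigenvalue of M with eigenvector x + i y, so that
  M x = a x - b y and M y = b x + a y. If b = 0, one of x, y is a real eigenvector of M for a.
  Otherwise x and y are linearly independent, so x \<and> y \<noteq> 0, and
  M^[2] (x \<and> y) = M x \<and> y + x \<and> M y = 2 a (x \<and> y). Either way a is a real eigenvalue of M
  or 2 a is a real eigenvalue of M^[2].

  A P0-matrix A has no negative real eigenvalue: adding t \<ge> 0 to the diagonal entries
  indexed by S gives a matrix whose principal minor on I is at least t^|I| if I \<subseteq> S and
  nonnegative otherwise (expand along one new diagonal entry at a time), hence
  det (A + t 1) > 0 for t > 0. For a P-matrix moreover det A > 0, which excludes 0.\<close>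

lemma index_mult_mat_vec_sum:
  "A \<in> carrier_mat m n \<Longrightarrow> u \<in> carrier_vec n \<Longrightarrow> i < m \<Longrightarrow>
   (A *\<^sub>v u) $ i = (\<Sum>k<n. A $$ (i, k) * u $ k)"
  by (auto simp: scalar_prod_def lessThan_atLeast0 intro!: sum.cong)

section \<open>Principal minors of diagonal shifts\<close>

lemma det_add_diag_entry:
  fixes C :: "'a :: comm_ring_1 mat"
  assumes C: "C \<in> carrier_mat q q" and j: "j < q"
  shows "det (mat q q (\<lambda>(r, s). C $$ (r, s) + (if r = j \<and> s = j then t else 0)))
       = det C + t * det (mat_delete C j j)"
proof -
  let ?C = "mat q q (\<lambda>(r, s). C $$ (r, s) + (if r = j \<and> s = j then t else 0))"
  have del: "mat_delete ?C j s = mat_delete C j s" if "s < q" for s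
    using C that by (intro eq_matI) (auto simp: mat_delete_def)
  have "det ?C = (\<Sum>s<q. ?C $$ (j, s) * cofactor ?C j s)"
    by (rule laplace_expansion_row) (use j in auto)
  also have "\<dots> = (\<Sum>s<q. C $$ (j, s) * cofactor C j s + (if s = j then t * cofactor C j j else 0))"
    by (rule sum.cong) (use j in \<open>auto simp: cofactor_def del algebra_simps\<close>)
  also have "\<dots> = det C + t * cofactor C j j"
    using j by (simp add: sum.distrib laplace_expansion_row[OF C j])
  finally show ?thesis
    by (simp add: cofactor_def)
qed

lemma pick_Diff_singleton:
  assumes fin: "finite I" and k: "k \<in> I" and r: "r < card I - 1"
  shows "pick (I - {k}) r = pick I (if r < card {a\<in>I. a < k} then r else Suc r)"
proof -
  define j where "j = card {a\<in>I. a < k}"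
  define r' where "r' = (if r < j then r else Suc r)"
  define x where "x = pick I r'"
  have "{a\<in>I. a < k} \<subset> I" using k by auto
  then have j: "j < card I" unfolding j_def using fin by (simp add: psubset_card_mono)
  have pick_j: "pick I j = k" unfolding j_def using k by (rule pick_card_in_set)
  have r': "r' < card I" "r' \<noteq> j" using r unfolding r'_def by auto
  then have xI: "x \<in> I" and cx: "card {a\<in>I. a < x} = r'"
    unfolding x_def using pick_in_set[of r' I] card_pick[of r' I] by auto
  have k_less_x: "k < x \<longleftrightarrow> j < r'"
    using pick_mono[of j I r'] pick_mono[of r' I j] r' j pick_j unfolding x_def
    by (cases "j < r'") auto
  have "x \<noteq> k" using cx r'(2) unfolding j_def by auto
  have "{a\<in>I - {k}. a < x} = {a\<in>I. a < x} - {k}" by auto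
  then have "card {a\<in>I - {k}. a < x} = r' - (if k < x then 1 else 0)"
    using fin k cx by (simp add: card_Diff_singleton_if)
  then have "card {a\<in>I - {k}. a < x} = r"
    using k_less_x unfolding r'_def by auto
  then have "pick (I - {k}) r = x" using pick_card_in_set[of x "I - {k}"] xI \<open>x \<noteq> k\<close> by auto
  then show ?thesis unfolding x_def r'_def j_def .
qed

lemma submatrix_principal:
  assumes "B \<in> carrier_mat m m" and "I \<subseteq> {0..<m}"
  shows "submatrix B I I = mat (card I) (card I) (\<lambda>(r, s). B $$ (pick I r, pick I s))"
proof -
  have "{i. i < m \<and> i \<in> I} = I" using assms by auto
  then show ?thesis using assms unfolding submatrix_def by simp
qed

lemma submatrix_all:
  assumes B: "B \<in> carrier_mat m m"
  shows "submatrix B {0..<m} {0..<m} = B"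
proof -
  have "pick {0..<m} r = r" if "r < m" for r
  proof -
    have "{a\<in>{0..<m}. a < r} = {0..<r}" using that by auto
    then show ?thesis using pick_card_in_set[of r "{0..<m}"] that by simp
  qed
  then show ?thesis using B by (intro eq_matI) (auto simp: submatrix_principal)
qed

lemma mat_delete_submatrix:
  assumes B: "B \<in> carrier_mat m m" and I: "I \<subseteq> {0..<m}" and k: "k \<in> I"
  defines "j \<equiv> card {a\<in>I. a < k}"
  shows "mat_delete (submatrix B I I) j j = submatrix B (I - {k}) (I - {k})"
proof -
  have fin: "finite I" using I finite_subset by blast
  have Ik: "I - {k} \<subseteq> {0..<m}" using I by auto
  have card: "card (I - {k}) = card I - 1" using fin k by simp
  show ?thesis
    unfolding submatrix_principal[OF B I] submatrix_principal[OF B Ik]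
  proof (rule eq_matI)
    fix r s assume "r < dim_row (mat (card (I - {k})) (card (I - {k})) (\<lambda>(r, s). B $$ (pick (I - {k}) r, pick (I - {k}) s)))"
      and "s < dim_col (mat (card (I - {k})) (card (I - {k})) (\<lambda>(r, s). B $$ (pick (I - {k}) r, pick (I - {k}) s)))"
    then have rs: "r < card I - 1" "s < card I - 1" using card by auto
    then show "mat_delete (mat (card I) (card I) (\<lambda>(r, s). B $$ (pick I r, pick I s))) j j $$ (r, s)
        = mat (card (I - {k})) (card (I - {k})) (\<lambda>(r, s). B $$ (pick (I - {k}) r, pick (I - {k}) s)) $$ (r, s)"
      using pick_Diff_singleton[OF fin k rs(1)] pick_Diff_singleton[OF fin k rs(2)] card
      by (auto simp: mat_delete_def j_def)
  qed (use card in auto)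
qed

definition diag_shift :: "real mat \<Rightarrow> real \<Rightarrow> nat set \<Rightarrow> real mat" where
  "diag_shift A t S = mat (dim_row A) (dim_col A) (\<lambda>(i, j). A $$ (i, j) + (if i = j \<and> i \<in> S then t else 0))"

lemma diag_shift_carrier [simp]: "A \<in> carrier_mat m m \<Longrightarrow> diag_shift A t S \<in> carrier_mat m m"
  unfolding diag_shift_def by auto

lemma diag_shift_empty: "A \<in> carrier_mat m m \<Longrightarrow> diag_shift A t {} = A"
  unfolding diag_shift_def by (intro eq_matI) auto

lemma diag_shift_insert:
  "A \<in> carrier_mat m m \<Longrightarrow> k \<notin> S \<Longrightarrow> diag_shift A t (insert k S) = diag_shift (diag_shift A t S) t {k}"
  unfolding diag_shift_def by (intro eq_matI) auto

lemma submatrix_diag_shift_disjoint: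
  assumes A: "A \<in> carrier_mat m m" and I: "I \<subseteq> {0..<m}" and "I \<inter> S = {}"
  shows "submatrix (diag_shift A t S) I I = submatrix A I I"
proof -
  have "pick I r \<in> I" if "r < card I" for r using that by (simp add: pick_in_set)
  then show ?thesis
    using assms unfolding submatrix_principal[OF A I] submatrix_principal[OF diag_shift_carrier[OF A] I]
    by (intro eq_matI) (auto simp: diag_shift_def subset_iff)
qed

lemma det_submatrix_diag_shift_singleton:
  assumes A: "A \<in> carrier_mat m m" and I: "I \<subseteq> {0..<m}" and k: "k \<in> I"
  shows "det (submatrix (diag_shift A t {k}) I I)
       = det (submatrix A I I) + t * det (submatrix A (I - {k}) (I - {k}))"
proof -
  define j where "j = card {a\<in>I. a < k}"
  define C where "C = submatrix A I I"
  have fin: "finite I" using I finite_subset by blast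
  have C: "C \<in> carrier_mat (card I) (card I)" unfolding C_def submatrix_principal[OF A I] by simp
  have j: "j < card I" unfolding j_def using k fin by (intro psubset_card_mono) auto
  have pick_k: "pick I r = k \<longleftrightarrow> r = j" if "r < card I" for r
    using card_pick[of r I] pick_card_in_set[OF k] that unfolding j_def by auto
  have pick_inj: "pick I r = pick I s \<longleftrightarrow> r = s" if "r < card I" "s < card I" for r s
    using pick_mono[of r I s] pick_mono[of s I r] that by (cases r s rule: linorder_cases) auto
  have "submatrix (diag_shift A t {k}) I I
      = mat (card I) (card I) (\<lambda>(r, s). C $$ (r, s) + (if r = j \<and> s = j then t else 0))"
    unfolding submatrix_principal[OF diag_shift_carrier[OF A] I] C_def submatrix_principal[OF A I]
    using A I pick_in_set[of _ I] pick_k pick_inj j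
    by (intro eq_matI) (auto simp: diag_shift_def subset_iff)
  then show ?thesis
    using det_add_diag_entry[OF C j] mat_delete_submatrix[OF A I k] unfolding C_def j_def by simp
qed

lemma det_empty_mat: "det (mat 0 0 f) = 1"
  by (simp add: det_def)

lemma P0_matrix_det_submatrix_diag_shift_ge:
  assumes A: "A \<in> carrier_mat m m" and P0: "P0_matrix A" and t: "t \<ge> 0"
    and S: "S \<subseteq> {0..<m}" and I: "I \<subseteq> {0..<m}"
  shows "det (submatrix (diag_shift A t S) I I) \<ge> (if I \<subseteq> S then t ^ card I else 0)"
proof -
  have "finite S" using S finite_subset by blast
  then show ?thesis
    using S I
  proof (induction S arbitrary: I rule: finite_induct)
    case empty
    show ?case
    proof (cases "I = {}")
      case True
      then show ?thesis
        using submatrix_principal[OF A empty.prems(2)] by (simp add: diag_shift_empty[OF A] det_empty_mat)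
    next
      case False
      then show ?thesis using P0 A empty.prems(2) by (simp add: P0_matrix_def diag_shift_empty)
    qed
  next
    case (insert k S)
    let ?B = "diag_shift A t S"
    have B: "?B \<in> carrier_mat m m" using A by simp
    have IH: "\<And>J. J \<subseteq> {0..<m} \<Longrightarrow> det (submatrix ?B J J) \<ge> (if J \<subseteq> S then t ^ card J else 0)"
      using insert.IH insert.prems(1) by blast
    have shift: "diag_shift A t (insert k S) = diag_shift ?B t {k}"
      by (rule diag_shift_insert[OF A insert.hyps(2)])
    show ?case
    proof (cases "k \<in> I")
      case False
      then have "submatrix (diag_shift A t (insert k S)) I I = submatrix ?B I I"
        unfolding shift using submatrix_diag_shift_disjoint[OF B insert.prems(2)] by blast
      moreover have "I \<subseteq> insert k S \<longleftrightarrow> I \<subseteq> S" using False by blast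
      ultimately show ?thesis using IH[OF insert.prems(2)] by simp
    next
      case True
      have Ik: "I - {k} \<subseteq> {0..<m}" using insert.prems(2) by auto
      have card: "card I = Suc (card (I - {k}))"
        using True insert.prems(2) by (metis card_Suc_Diff1 finite_atLeastLessThan finite_subset)
      have "det (submatrix ?B I I) \<ge> 0"
        using IH[OF insert.prems(2)] zero_le_power[OF t, of "card I"] by (auto split: if_splits)
      moreover have "I - {k} \<subseteq> S \<longleftrightarrow> I \<subseteq> insert k S" by blast
      then have "t * (if I \<subseteq> insert k S then t ^ card (I - {k}) else 0)
          \<le> t * det (submatrix ?B (I - {k}) (I - {k}))"
        using IH[OF Ik] t by (intro mult_left_mono) auto
      ultimately show ?thesis
        unfolding shift det_submatrix_diag_shift_singleton[OF B insert.prems(2) True]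
        using card by (auto split: if_splits)
    qed
  qed
qed

lemma P0_matrix_det_diag_shift_pos:
  assumes A: "A \<in> carrier_mat m m" and "P0_matrix A" and t: "t > 0"
  shows "det (diag_shift A t {0..<m}) > 0"
proof -
  have "det (submatrix (diag_shift A t {0..<m}) {0..<m} {0..<m}) \<ge> t ^ m"
    using P0_matrix_det_submatrix_diag_shift_ge[OF assms(1,2), of t "{0..<m}" "{0..<m}"] t by simp
  then show ?thesis
    using submatrix_all[OF diag_shift_carrier[OF A]] by (auto intro: less_le_trans[OF zero_less_power[OF t]])
qed

lemma char_matrix_eq_diag_shift:
  "A \<in> carrier_mat m m \<Longrightarrow> char_matrix A e = diag_shift A (- e) {0..<m}"
  unfolding char_matrix_def diag_shift_def by (intro eq_matI) auto

lemma P0_matrix_eigenvalue_nonneg: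
  assumes A: "A \<in> carrier_mat m m" and P0: "P0_matrix A" and ev: "eigenvalue A \<mu>"
  shows "\<mu> \<ge> 0"
proof (rule ccontr)
  assume "\<not> \<mu> \<ge> 0"
  then have "det (diag_shift A (- \<mu>) {0..<m}) > 0"
    by (intro P0_matrix_det_diag_shift_pos[OF A P0]) simp
  moreover have "det (diag_shift A (- \<mu>) {0..<m}) = 0"
    using ev by (simp add: eigenvalue_det[OF A] char_matrix_eq_diag_shift[OF A])
  ultimately show False by simp
qed

lemma P_matrix_eigenvalue_pos:
  assumes A: "A \<in> carrier_mat m m" and P: "P_matrix A" and ev: "eigenvalue A \<mu>"
  shows "\<mu> > 0"
proof -
  have "P0_matrix A" using P unfolding P_matrix_def P0_matrix_def by (auto simp: less_imp_le)
  then have "\<mu> \<ge> 0" by (rule P0_matrix_eigenvalue_nonneg[OF A _ ev])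
  moreover have "m > 0" by (rule eigenvalue_imp_nonzero_dim[OF A ev])
  then have "det A > 0" using P A submatrix_all[OF A] unfolding P_matrix_def by force
  moreover have "char_matrix A 0 = A" using A by (intro eq_matI) (auto simp: char_matrix_def)
  ultimately have "\<not> eigenvalue A 0" by (simp add: eigenvalue_det[OF A])
  with \<open>\<mu> \<ge> 0\<close> show ?thesis using ev by (cases "\<mu> = 0") auto
qed

section \<open>The second additive compound on wedge products\<close>

lemma sum_square_eq_twice_upper_triangle:
  fixes f :: "nat \<Rightarrow> nat \<Rightarrow> 'a::comm_ring_1"
  assumes sym: "\<And>k l. f k l = f l k" and diag: "\<And>k. f k k = 0"
  shows "(\<Sum>k<n. \<Sum>l<n. f k l) = 2 * (\<Sum>k<n. \<Sum>l\<in>{k<..<n}. f k l)"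
proof -
  have split: "(\<Sum>l<n. f k l) = (\<Sum>l<k. f k l) + (\<Sum>l\<in>{k<..<n}. f k l)" if "k < n" for k
  proof -
    have "{..<n} = insert k ({..<k} \<union> {k<..<n})" using that by auto
    then have "(\<Sum>l<n. f k l) = (\<Sum>l\<in>{..<k} \<union> {k<..<n}. f k l)"
      by (simp add: diag)
    also have "\<dots> = (\<Sum>l<k. f k l) + (\<Sum>l\<in>{k<..<n}. f k l)"
      by (rule sum.union_disjoint) auto
    finally show ?thesis .
  qed
  have "(\<Sum>k<n. \<Sum>l<k. f k l) = (\<Sum>k<n. \<Sum>l\<in>{l\<in>{..<n}. l < k}. f k l)"
    by (intro sum.cong) auto
  also have "\<dots> = (\<Sum>l<n. \<Sum>k\<in>{k\<in>{..<n}. l < k}. f k l)"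
    by (rule sum.swap_restrict) auto
  also have "\<dots> = (\<Sum>l<n. \<Sum>k\<in>{l<..<n}. f l k)"
    by (intro sum.cong) (auto simp: sym)
  finally have lower: "(\<Sum>k<n. \<Sum>l<k. f k l) = (\<Sum>k<n. \<Sum>l\<in>{k<..<n}. f k l)" .
  have "(\<Sum>k<n. \<Sum>l<n. f k l) = (\<Sum>k<n. (\<Sum>l<k. f k l) + (\<Sum>l\<in>{k<..<n}. f k l))"
    by (rule sum.cong) (simp_all add: split)
  also have "\<dots> = 2 * (\<Sum>k<n. \<Sum>l\<in>{k<..<n}. f k l)"
    by (simp only: sum.distrib lower mult_2)
  finally show ?thesis .
qed

lemma compound2_entry_antisym_sum:
  fixes M :: "real mat" and w :: "nat \<Rightarrow> nat \<Rightarrow> real"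
  assumes ij: "i < n" "j < n" and antisym: "\<And>k l. w k l = - w l k"
  shows "(\<Sum>k<n. \<Sum>l\<in>{k<..<n}. compound2_entry M (i, j) (k, l) * w k l)
       = (\<Sum>k<n. M $$ (i, k) * w k j + M $$ (j, k) * w i k)"
proof -
  define g where "g k l = compound2_entry M (i, j) (k, l) * w k l" for k l
  have g_sym: "g k l = g l k" for k l
    unfolding g_def compound2_entry_def using antisym[of k l] by (simp add: algebra_simps)
  have g_diag: "g k k = 0" for k
    unfolding g_def using antisym[of k k] by simp
  have g_expand: "g k l = (if l = j then M $$ (i, k) * w k l else 0)
      - (if l = i then M $$ (j, k) * w k l else 0)
      + (if k = i then M $$ (j, l) * w k l else 0)
      - (if k = j then M $$ (i, l) * w k l else 0)" for k l
    unfolding g_def compound2_entry_def by (simp add: algebra_simps)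
  have row: "(\<Sum>l<n. g k l) = M $$ (i, k) * w k j - M $$ (j, k) * w k i
      + (if k = i then \<Sum>l<n. M $$ (j, l) * w i l else 0)
      - (if k = j then \<Sum>l<n. M $$ (i, l) * w j l else 0)" for k
    using ij by (simp only: g_expand sum.distrib sum_subtractf) (simp add: sum.delta')
  txt \<open>Summing over all pairs instead of k < l lets the Kronecker deltas in g collapse.\<close>
  have "2 * (\<Sum>k<n. \<Sum>l\<in>{k<..<n}. g k l) = (\<Sum>k<n. \<Sum>l<n. g k l)"
    by (rule sum_square_eq_twice_upper_triangle[symmetric]) (use g_sym g_diag in auto)
  also have "\<dots> = (\<Sum>k<n. M $$ (i, k) * w k j) - (\<Sum>k<n. M $$ (j, k) * w k i)
      + (\<Sum>l<n. M $$ (j, l) * w i l) - (\<Sum>l<n. M $$ (i, l) * w j l)"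
    using ij by (simp add: row sum.distrib sum_subtractf)
  also have "\<dots> = 2 * (\<Sum>k<n. M $$ (i, k) * w k j + M $$ (j, k) * w i k)"
    by (simp add: antisym[of _ i] antisym[of j] sum.distrib sum_negf)
  finally show ?thesis unfolding g_def by simp
qed

lemma set_wedge_pairs: "set (wedge_pairs n) = {(i, j). i < j \<and> j < n}"
  unfolding wedge_pairs_def by (auto simp: image_iff)

lemma wedge_pairs_nth:
  assumes "q < length (wedge_pairs n)" and "wedge_pairs n ! q = (i, j)"
  shows "i < j" and "j < n"
  using assms nth_mem[OF assms(1)] by (auto simp: set_wedge_pairs)

lemma sum_wedge_pairs:
  "(\<Sum>q<length (wedge_pairs n). f (wedge_pairs n ! q)) = (\<Sum>i<n. \<Sum>j\<in>{i<..<n}. f (i, j) :: real)"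
proof -
  have concat: "sum_list (map f (concat xss)) = (\<Sum>xs\<leftarrow>xss. sum_list (map f xs))" for xss
    by (induct xss) auto
  have "(\<Sum>q<length (wedge_pairs n). f (wedge_pairs n ! q)) = sum_list (map f (wedge_pairs n))"
    by (simp add: sum_list_sum_nth lessThan_atLeast0)
  also have "\<dots> = (\<Sum>i\<leftarrow>[0..<n]. \<Sum>j\<leftarrow>[Suc i..<n]. f (i, j))"
    unfolding wedge_pairs_def by (simp add: concat comp_def)
  also have "\<dots> = (\<Sum>i<n. \<Sum>j\<in>{i<..<n}. f (i, j))"
    by (simp add: interv_sum_list_conv_sum_set_nat lessThan_atLeast0 atLeastSucLessThan_greaterThanLessThan)
  finally show ?thesis .
qed

lemma second_additive_compound_carrier:
  "M \<in> carrier_mat n n \<Longrightarrow>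
   second_additive_compound M \<in> carrier_mat (length (wedge_pairs n)) (length (wedge_pairs n))"
  unfolding second_additive_compound_def Let_def by auto

lemma index_second_additive_compound:
  "p < length (wedge_pairs (dim_row M)) \<Longrightarrow> q < length (wedge_pairs (dim_row M)) \<Longrightarrow>
   second_additive_compound M $$ (p, q) = compound2_entry M (wedge_pairs (dim_row M) ! p) (wedge_pairs (dim_row M) ! q)"
  unfolding second_additive_compound_def Let_def by simp

definition wedge :: "nat \<Rightarrow> real vec \<Rightarrow> real vec \<Rightarrow> real vec" where
  "wedge n x y = vec (length (wedge_pairs n))
     (\<lambda>q. case wedge_pairs n ! q of (k, l) \<Rightarrow> x $ k * y $ l - x $ l * y $ k)"

lemma second_additive_compound_mult_wedge:
  assumes M: "M \<in> carrier_mat n n" and x: "x \<in> carrier_vec n" and y: "y \<in> carrier_vec n"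
  shows "second_additive_compound M *\<^sub>v wedge n x y = wedge n (M *\<^sub>v x) y + wedge n x (M *\<^sub>v y)"
proof (rule eq_vecI)
  let ?ps = "wedge_pairs n" and ?L = "length (wedge_pairs n)"
  define w where "w k l = x $ k * y $ l - x $ l * y $ k" for k l
  fix p assume "p < dim_vec (wedge n (M *\<^sub>v x) y + wedge n x (M *\<^sub>v y))"
  then have p: "p < ?L" by (simp add: wedge_def)
  obtain i j where ij: "?ps ! p = (i, j)" by fastforce
  have i: "i < n" and j: "j < n" using wedge_pairs_nth[OF p ij] by auto
  have "(second_additive_compound M *\<^sub>v wedge n x y) $ p
      = (\<Sum>q<?L. second_additive_compound M $$ (p, q) * wedge n x y $ q)"
    by (rule index_mult_mat_vec_sum[OF second_additive_compound_carrier[OF M] _ p]) (simp add: wedge_def)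
  also have "\<dots> = (\<Sum>q<?L. compound2_entry M (i, j) (?ps ! q) * (case ?ps ! q of (k, l) \<Rightarrow> w k l))"
    using M p ij by (intro sum.cong) (auto simp: index_second_additive_compound wedge_def w_def)
  also have "\<dots> = (\<Sum>k<n. \<Sum>l\<in>{k<..<n}. compound2_entry M (i, j) (k, l) * w k l)"
    using sum_wedge_pairs[of "\<lambda>(k, l). compound2_entry M (i, j) (k, l) * w k l" n]
    by (simp add: case_prod_beta)
  also have "\<dots> = (\<Sum>k<n. M $$ (i, k) * w k j + M $$ (j, k) * w i k)"
    by (rule compound2_entry_antisym_sum[OF i j]) (simp add: w_def)
  also have "\<dots> = (\<Sum>k<n. M $$ (i, k) * x $ k) * y $ j - (\<Sum>k<n. M $$ (j, k) * x $ k) * y $ i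
      + x $ i * (\<Sum>k<n. M $$ (j, k) * y $ k) - x $ j * (\<Sum>k<n. M $$ (i, k) * y $ k)"
    by (simp add: w_def sum.distrib sum_subtractf sum_distrib_left sum_distrib_right algebra_simps)
  also have "\<dots> = (wedge n (M *\<^sub>v x) y + wedge n x (M *\<^sub>v y)) $ p"
    using M x y i j p ij
    by (simp add: wedge_def index_mult_mat_vec_sum[OF M] del: index_mult_mat_vec)
  finally show "(second_additive_compound M *\<^sub>v wedge n x y) $ p = \<dots>" .
qed (use M in \<open>simp add: wedge_def second_additive_compound_def Let_def\<close>)

lemma wedge_eq_zero_imp_proportional:
  assumes x: "x \<in> carrier_vec n" and y: "y \<in> carrier_vec n"
    and zero: "wedge n x y = 0\<^sub>v (length (wedge_pairs n))" and "i < n" "j < n"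
  shows "x $ i * y $ j = x $ j * y $ i"
proof -
  have upper: "x $ k * y $ l = x $ l * y $ k" if "k < l" "l < n" for k l
  proof -
    have "(k, l) \<in> set (wedge_pairs n)" using that by (simp add: set_wedge_pairs)
    then obtain q where q: "q < length (wedge_pairs n)" "wedge_pairs n ! q = (k, l)"
      by (auto simp: in_set_conv_nth)
    have "wedge n x y $ q = 0" using zero q(1) by simp
    then show ?thesis using q by (simp add: wedge_def)
  qed
  consider "i < j" | "i = j" | "j < i" by linarith
  then show ?thesis
    by cases (use upper[of i j] upper[of j i] \<open>i < n\<close> \<open>j < n\<close> in auto)
qed

lemma wedge_rotation:
  assumes x: "x \<in> carrier_vec n" and y: "y \<in> carrier_vec n"
  shows "wedge n (a \<cdot>\<^sub>v x - b \<cdot>\<^sub>v y) y + wedge n x (b \<cdot>\<^sub>v x + a \<cdot>\<^sub>v y) = (2 * a) \<cdot>\<^sub>v wedge n x y"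
proof (rule eq_vecI)
  fix q assume "q < dim_vec ((2 * a) \<cdot>\<^sub>v wedge n x y)"
  then have q: "q < length (wedge_pairs n)" by (simp add: wedge_def)
  obtain i j where ij: "wedge_pairs n ! q = (i, j)" by fastforce
  have "i < n" "j < n" using wedge_pairs_nth[OF q ij] by auto
  then show "(wedge n (a \<cdot>\<^sub>v x - b \<cdot>\<^sub>v y) y + wedge n x (b \<cdot>\<^sub>v x + a \<cdot>\<^sub>v y)) $ q
      = ((2 * a) \<cdot>\<^sub>v wedge n x y) $ q"
    using q ij x y by (simp add: wedge_def) (simp add: algebra_simps)
qed (simp add: wedge_def)

lemma wedge_neq_zero_if_rotation:
  assumes M: "M \<in> carrier_mat n n" and x: "x \<in> carrier_vec n" and y: "y \<in> carrier_vec n"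
    and Mx: "M *\<^sub>v x = a \<cdot>\<^sub>v x - b \<cdot>\<^sub>v y" and My: "M *\<^sub>v y = b \<cdot>\<^sub>v x + a \<cdot>\<^sub>v y"
    and "b \<noteq> 0" and p: "p < n" "x $ p \<noteq> 0 \<or> y $ p \<noteq> 0"
  shows "wedge n x y \<noteq> 0\<^sub>v (length (wedge_pairs n))"
proof
  assume "wedge n x y = 0\<^sub>v (length (wedge_pairs n))"
  then have proportional: "x $ p * y $ k = x $ k * y $ p" if "k < n" for k
    using wedge_eq_zero_imp_proportional[OF x y] p(1) that by blast
  have "- b * (x $ p ^ 2 + y $ p ^ 2) = y $ p * (M *\<^sub>v x) $ p - x $ p * (M *\<^sub>v y) $ p"
    using Mx My x y p(1) by (simp add: power2_eq_square algebra_simps)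
  also have "\<dots> = (\<Sum>k<n. M $$ (p, k) * (y $ p * x $ k - x $ p * y $ k))"
    by (simp add: index_mult_mat_vec_sum[OF M x p(1)] index_mult_mat_vec_sum[OF M y p(1)]
        sum_distrib_left sum_subtractf algebra_simps del: index_mult_mat_vec)
  also have "\<dots> = 0"
    using proportional by (simp add: mult.commute)
  finally have "x $ p ^ 2 + y $ p ^ 2 = 0" using \<open>b \<noteq> 0\<close> by simp
  then show False using p(2) by (simp add: sum_power2_eq_zero_iff)
qed

lemma map_vec_Re_mult_mat_vec_of_real:
  "M \<in> carrier_mat n m \<Longrightarrow> v \<in> carrier_vec m \<Longrightarrow>
   map_vec Re (map_mat complex_of_real M *\<^sub>v v) = M *\<^sub>v map_vec Re v"
  by (auto intro!: eq_vecI sum.cong simp: scalar_prod_def Re_sum)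

lemma map_vec_Im_mult_mat_vec_of_real:
  "M \<in> carrier_mat n m \<Longrightarrow> v \<in> carrier_vec m \<Longrightarrow>
   map_vec Im (map_mat complex_of_real M *\<^sub>v v) = M *\<^sub>v map_vec Im v"
  by (auto intro!: eq_vecI sum.cong simp: scalar_prod_def Im_sum)

lemma eigenvalue_Re_or_second_additive_compound:
  fixes M :: "real mat"
  assumes M: "M \<in> carrier_mat n n" and ev: "eigenvalue (map_mat complex_of_real M) c"
  shows "eigenvalue M (Re c) \<or> eigenvalue (second_additive_compound M) (2 * Re c)"
proof -
  obtain v where v: "v \<in> carrier_vec n" "v \<noteq> 0\<^sub>v n" "map_mat complex_of_real M *\<^sub>v v = c \<cdot>\<^sub>v v"
    using ev M unfolding eigenvalue_def eigenvector_def by auto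
  define x where "x = map_vec Re v"
  define y where "y = map_vec Im v"
  have x: "x \<in> carrier_vec n" and y: "y \<in> carrier_vec n" using v(1) by (auto simp: x_def y_def)
  have Mx: "M *\<^sub>v x = Re c \<cdot>\<^sub>v x - Im c \<cdot>\<^sub>v y"
  proof -
    have "M *\<^sub>v x = map_vec Re (c \<cdot>\<^sub>v v)"
      using map_vec_Re_mult_mat_vec_of_real[OF M v(1)] v(3) by (simp add: x_def)
    then show ?thesis using v(1) by (auto intro!: eq_vecI simp: x_def y_def)
  qed
  have My: "M *\<^sub>v y = Im c \<cdot>\<^sub>v x + Re c \<cdot>\<^sub>v y"
  proof -
    have "M *\<^sub>v y = map_vec Im (c \<cdot>\<^sub>v v)"
      using map_vec_Im_mult_mat_vec_of_real[OF M v(1)] v(3) by (simp add: y_def)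
    then show ?thesis using v(1) by (auto intro!: eq_vecI simp: x_def y_def)
  qed
  obtain p where p: "p < n" "v $ p \<noteq> 0"
    using v(1,2) by (metis carrier_vecD eq_vecI index_zero_vec)
  then have xy: "x $ p \<noteq> 0 \<or> y $ p \<noteq> 0"
    using v(1) by (auto simp: x_def y_def complex_eq_iff)
  show ?thesis
  proof (cases "Im c = 0")
    case True
    have "eigenvector M z (Re c)" if "z \<in> {x, y}" "z $ p \<noteq> 0" for z
      using that x y Mx My M p(1) True unfolding eigenvector_def by auto
    then show ?thesis
      using xy unfolding eigenvalue_def by blast
  next
    case False
    let ?w = "wedge n x y"
    have "second_additive_compound M *\<^sub>v ?w = (2 * Re c) \<cdot>\<^sub>v ?w"
      using second_additive_compound_mult_wedge[OF M x y] wedge_rotation[OF x y] by (simp add: Mx My)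
    moreover have "?w \<noteq> 0\<^sub>v (length (wedge_pairs n))"
      by (rule wedge_neq_zero_if_rotation[OF M x y Mx My False p(1) xy])
    ultimately have "eigenvector (second_additive_compound M) ?w (2 * Re c)"
      using second_additive_compound_carrier[OF M] unfolding eigenvector_def by (auto simp: wedge_def)
    then show ?thesis unfolding eigenvalue_def by blast
  qed
qed

theorem lemma2p5:
  fixes M :: "real mat" and n :: nat
  assumes "M \<in> carrier_mat n n" and "n \<ge> 2"
  shows "(P0_matrix M \<and> P0_matrix (second_additive_compound M) \<longrightarrow> positive_semistable M)
       \<and> (P_matrix M \<and> P_matrix (second_additive_compound M) \<longrightarrow> positive_stable M)"
proof -
  note M = assms(1) and M2 = second_additive_compound_carrier[OF assms(1)]
  note real_eigenvalue = eigenvalue_Re_or_second_additive_compound[OF M]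
  show ?thesis
    unfolding positive_semistable_def positive_stable_def
  proof (intro conjI impI allI)
    fix c assume "P0_matrix M \<and> P0_matrix (second_additive_compound M)"
      and "eigenvalue (map_mat complex_of_real M) c"
    then show "Re c \<ge> 0"
      using real_eigenvalue P0_matrix_eigenvalue_nonneg[OF M] P0_matrix_eigenvalue_nonneg[OF M2] by fastforce
  next
    fix c assume "P_matrix M \<and> P_matrix (second_additive_compound M)"
      and "eigenvalue (map_mat complex_of_real M) c"
    then show "Re c > 0"
      using real_eigenvalue P_matrix_eigenvalue_pos[OF M] P_matrix_eigenvalue_pos[OF M2] by fastforce
  qed
qed

end
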